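(* Let $n \ge 2$ be an integer and let $p_0 = \frac{n\log n - (n-1)\log(n-1)}{\log n}$. Then for every $p$ with $p_0 \le p \le 2$, $$\max\left\{1,\frac{n!}{n^{n/p}}\right\} \le U(n,p) \le \exp\left\{\frac{p-1}{p}\, e^{1/(p-1)}\right\}\cdot \frac{n!}{n^{n/p}}.$$
   Context: For $n\ge 1$ and $1 \le p \le \infty$, $U(n,p)$ denotes the maximum of $\mathrm{per}(A)=\sum_{\sigma\in S_n}\prod_{i=1}^n a_{i\sigma(i)}$ over all real $n\times n$ matrices $A$ each of whose rows has $\ell_p$-norm equal to $1$. *)

theory Defs
  imports Complex_Main "HOL-Combinatorics.Permutations"
begin

text \<open>Real n x n matrices are represented as functions nat => nat => real,
  only the entries with indices below n being relevant.\<close>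

definition per :: "nat \<Rightarrow> (nat \<Rightarrow> nat \<Rightarrow> real) \<Rightarrow> real" where
  "per n A = (\<Sum>\<sigma> \<in> {\<sigma>. \<sigma> permutes {..<n}}. \<Prod>i<n. A i (\<sigma> i))"

definition row_lp_norm :: "nat \<Rightarrow> real \<Rightarrow> (nat \<Rightarrow> nat \<Rightarrow> real) \<Rightarrow> nat \<Rightarrow> real" where
  "row_lp_norm n p A i = (\<Sum>j<n. \<bar>A i j\<bar> powr p) powr (1 / p)"

text \<open>U(n,p): maximum of the permanent over matrices whose rows all have l_p norm 1
  (the maximum is attained by compactness, so it equals the supremum).\<close>
definition U :: "nat \<Rightarrow> real \<Rightarrow> real" where
  "U n p = Sup {per n A | A. \<forall>i<n. row_lp_norm n p A i = 1}"

end

theory Submission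
  imports Defs "HOL-Real_Asymp.Real_Asymp"
begin

(* The lower bound is attained by the identity matrix and by the constant matrix with
   entries n powr (-1/p).

   For the upper bound one may assume A >= 0.  By induction on k, the permanent of a
   k x k block is at most block_bound p k = M_1 * ... * M_k times the product of the
   l_p norms of its rows, where M_k = step_factor p k = exp (max 0 ((p-1) ln k - kappa k) / p)
   and kappa k = (k-1) ln (k/(k-1)).  Expanding along every row and averaging over the
   rows, column j contributes exactly_one p R x = sum_i x_i^(1/p) prod_(l ~= i) (1-x_l)^(1/p),
   where x_l is the share of a_lj^p in the p-th power of the norm of row l.  Writing the
   logarithm of this sum by the Gibbs variational formula, with weights w_i proportional
   to its terms, bounds it by M_k as soon as every probability vector w of length k satisfies
     - ln k * sum_i (1 - w_i) ln (1 - w_i) >= - kappa k * sum_i w_i ln w_i,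
   an equality at the uniform vector.  This inequality is proved by pairing each
   coordinate above 1/k with those below 1/k, using convexity of the summand on [0, 1/k]
   and a one-variable analysis of the vector (x, (1-x)/(k-1), ..., (1-x)/(k-1)).
   Finally sum_(j<=n) kappa j = n ln n - ln n! and ln n! >= n ln n - n + 1 bound
   block_bound p n by the stated constant. *)

lemma mvt_real:
  fixes f f' :: "real \<Rightarrow> real"
  assumes "a < b" and "continuous_on {a..b} f"
    and "\<And>x. a < x \<Longrightarrow> x < b \<Longrightarrow> (f has_real_derivative f' x) (at x)"
  obtains z where "a < z" "z < b" "f b - f a = (b - a) * f' z"
proof -
  have "\<And>x. a < x \<Longrightarrow> x < b \<Longrightarrow> (f has_derivative (*) (f' x)) (at x)"
    using assms(3) by (simp add: has_field_derivative_def)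
  from mvt[OF assms(1,2) this] obtain z where "a < z" "z < b" "f b - f a = f' z * (b - a)" .
  then show thesis
    using that by (simp add: mult.commute)
qed

definition xlnx :: "real \<Rightarrow> real" where
  "xlnx t = t * ln t"

lemma xlnx_0 [simp]: "xlnx 0 = 0" and xlnx_1 [simp]: "xlnx 1 = 0"
  by (simp_all add: xlnx_def)

lemma xlnx_nonpos: "0 \<le> t \<Longrightarrow> t \<le> 1 \<Longrightarrow> xlnx t \<le> 0"
  unfolding xlnx_def by (cases "t = 0") (auto intro!: mult_nonneg_nonpos)

lemma continuous_on_xlnx: "continuous_on {0..} xlnx"
proof -
  have "continuous (at x within {0..}) xlnx" if "x \<in> {0..}" for x
  proof (cases "x = 0")
    case True
    have "(xlnx \<longlongrightarrow> 0) (at_right 0)"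
      unfolding xlnx_def by real_asymp
    then show ?thesis
      using True by (simp add: continuous_within at_within_Ici_at_right)
  next
    case False
    then have "isCont xlnx x"
      using that unfolding xlnx_def by (auto intro!: continuous_intros)
    then show ?thesis
      using continuous_at_imp_continuous_at_within by blast
  qed
  then show ?thesis
    using continuous_on_eq_continuous_within by blast
qed

lemma continuous_on_xlnx_comp:
  "continuous_on S f \<Longrightarrow> (\<And>x. x \<in> S \<Longrightarrow> 0 \<le> f x) \<Longrightarrow> continuous_on S (\<lambda>x. xlnx (f x))"
  by (rule continuous_on_compose2[OF continuous_on_xlnx]) auto

section \<open>An entropy inequality\<close>

text \<open>\<open>kappa K\<close> is chosen so that \<open>chi K\<close> vanishes at \<open>1 / K\<close>. Since
  \<open>kappa n = (p\<^sub>0 - 1) ln n\<close>, the hypothesis \<open>p\<^sub>0 \<le> p\<close> of the theorem says exactly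
  that \<open>(p - 1) ln n - kappa n \<ge> 0\<close>.\<close>

definition kappa :: "real \<Rightarrow> real" where
  "kappa K = (K - 1) * ln (K / (K - 1))"

definition chi :: "real \<Rightarrow> real \<Rightarrow> real" where
  "chi K w = kappa K * xlnx w - ln K * xlnx (1 - w)"

definition chi' :: "real \<Rightarrow> real \<Rightarrow> real" where
  "chi' K w = kappa K * (ln w + 1) + ln K * (ln (1 - w) + 1)"

definition chi'' :: "real \<Rightarrow> real \<Rightarrow> real" where
  "chi'' K w = kappa K / w - ln K / (1 - w)"

lemma has_real_derivative_chi:
  "0 < w \<Longrightarrow> w < 1 \<Longrightarrow> (chi K has_real_derivative chi' K w) (at w)"
  unfolding chi_def [abs_def] chi'_def xlnx_def
  by (rule derivative_eq_intros refl | simp)+ (simp add: field_simps)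

lemma has_real_derivative_chi':
  "0 < w \<Longrightarrow> w < 1 \<Longrightarrow> (chi' K has_real_derivative chi'' K w) (at w)"
  unfolding chi'_def [abs_def] chi''_def
  by (auto intro!: derivative_eq_intros simp: field_simps)

lemma continuous_on_chi: "continuous_on {0..1} (chi K)"
  unfolding chi_def [abs_def]
  by (intro continuous_intros continuous_on_xlnx_comp) auto

lemma chi_0 [simp]: "chi K 0 = 0" and chi_1 [simp]: "chi K 1 = 0"
  by (simp_all add: chi_def)

lemma chi_inverse:
  assumes "K > 1" shows "chi K (1 / K) = 0"
proof -
  have "ln (1 - 1 / K) = - ln (K / (K - 1))"
    using assms by (simp add: ln_div field_simps)
  then show ?thesis
    using assms by (simp add: chi_def xlnx_def kappa_def ln_div field_simps)
qed

lemma kappa_nonneg: "K > 1 \<Longrightarrow> 0 \<le> kappa K"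
  unfolding kappa_def by (auto intro!: mult_nonneg_nonneg simp: field_simps)

lemma kappa_le_ln:
  assumes "K \<ge> 2" shows "kappa K \<le> (K - 1) * ln K"
proof -
  have "ln (K / (K - 1)) \<le> ln K"
    using assms by (subst ln_le_cancel_iff) (auto simp: field_simps)
  then show ?thesis
    using assms unfolding kappa_def by (intro mult_left_mono) auto
qed

lemma kappa_le_1:
  assumes "K \<ge> 1" shows "kappa K \<le> 1"
proof (cases "K = 1")
  case False
  then have "K > 1" using assms by simp
  then have "(K - 1) * ln (K / (K - 1)) \<le> (K - 1) * (K / (K - 1) - 1)"
    by (intro mult_left_mono ln_le_minus_one) auto
  also have "\<dots> = 1"
    using \<open>K > 1\<close> by (simp add: field_simps)
  finally show ?thesis by (simp add: kappa_def)
qed (simp add: kappa_def)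

lemma ln_le_kappa:
  fixes k :: nat
  assumes k: "k \<ge> 2"
  shows "ln (real k) \<le> (real k - 1) * kappa (real k)"
proof -
  consider "k = 2" | "k = 3" | "k \<ge> 4" using k by linarith
  then show ?thesis
  proof cases
    case 1
    then show ?thesis by (simp add: kappa_def)
  next
    case 2
    have "ln (3::real) \<le> ln ((3/2)^4)"
      by (subst ln_le_cancel_iff) (auto simp: power_divide)
    also have "\<dots> = 4 * ln (3/2)"
      by (simp add: ln_realpow)
    finally show ?thesis
      using 2 by (simp add: kappa_def)
  next
    case 3
    define K where "K = real k"
    have K: "K \<ge> 4" using 3 by (simp add: K_def)
    have "a\<^sup>2 * (1 / a - (1 / a)\<^sup>2) = a - 1" if "a \<noteq> 0" for a :: real
      using that by (simp add: field_simps power2_eq_square)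
    then have "K - 2 = (K - 1)^2 * (1 / (K - 1) - (1 / (K - 1))^2)"
      using K by simp
    also have "\<dots> \<le> (K - 1)^2 * ln (1 + 1 / (K - 1))"
      using K by (intro mult_left_mono ln_one_plus_pos_lower_bound) auto
    also have "1 + 1 / (K - 1) = K / (K - 1)"
      using K by (simp add: field_simps)
    finally have "K - 2 \<le> (K - 1) * kappa K"
      by (simp add: kappa_def power2_eq_square)
    moreover have "ln K \<le> K - 2"
    proof -
      have "ln (K / 2) \<le> K / 2 - 1"
        using K by (intro ln_le_minus_one) auto
      moreover have "ln (2::real) \<le> 1"
        using ln_le_minus_one[of "2::real"] by simp
      ultimately show ?thesis
        using K by (simp add: ln_div)
    qed
    ultimately show ?thesis
      by (simp add: K_def)
  qed
qed

lemma chi''_nonneg: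
  fixes k :: nat
  assumes k: "k \<ge> 2" and w: "0 < w" "w \<le> 1 / real k"
  shows "0 \<le> chi'' (real k) w"
proof -
  let ?K = "real k"
  have K: "?K \<ge> 2" using k by simp
  have "1 / ?K \<le> 1 / 2" using K by (intro divide_left_mono) auto
  then have w1: "w < 1" using w by linarith
  have "ln ?K * w \<le> ln ?K * (1 / ?K)"
    using w K by (intro mult_left_mono) auto
  also have "\<dots> \<le> kappa ?K * (?K - 1) / ?K"
    using ln_le_kappa[OF k] K by (simp add: divide_right_mono mult.commute)
  also have "\<dots> = kappa ?K * (1 - 1 / ?K)"
    using K by (simp add: field_simps)
  also have "\<dots> \<le> kappa ?K * (1 - w)"
    using w kappa_nonneg[of ?K] K by (intro mult_left_mono) auto
  finally have "ln ?K * w \<le> kappa ?K * (1 - w)" .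
  then show ?thesis
    using w w1 by (simp add: chi''_def field_simps)
qed

lemma chi'_mono:
  fixes k :: nat
  assumes k: "k \<ge> 2" and "0 < a" "a \<le> b" "b \<le> 1 / real k"
  shows "chi' (real k) a \<le> chi' (real k) b"
proof (rule DERIV_nonneg_imp_nondecreasing[OF \<open>a \<le> b\<close>])
  fix t assume t: "a \<le> t" "t \<le> b"
  have "1 / real k < 1" using k by simp
  then have "0 < t" "t < 1" "t \<le> 1 / real k" using t assms by linarith+
  then show "\<exists>y. (chi' (real k) has_real_derivative y) (at t) \<and> 0 \<le> y"
    using has_real_derivative_chi' chi''_nonneg[OF k] by blast
qed

text \<open>The tangent point must be interior: \<open>chi k\<close> has infinite slope at \<open>0\<close>.\<close>

lemma chi_above_tangent:
  fixes k :: nat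
  assumes k: "k \<ge> 2" and y: "0 < y" "y \<le> 1 / real k" and v: "0 \<le> v" "v \<le> 1 / real k"
  shows "chi (real k) y + chi' (real k) y * (v - y) \<le> chi (real k) v"
proof -
  have "1 / real k < 1" using k by simp
  then have cont: "continuous_on {a..b} (chi (real k))" if "0 \<le> a" "b \<le> 1 / real k" for a b
    using continuous_on_subset[OF continuous_on_chi] that by fastforce
  have deriv: "(chi (real k) has_real_derivative chi' (real k) x) (at x)"
    if "0 < x" "x \<le> 1 / real k" for x
    using has_real_derivative_chi that \<open>1 / real k < 1\<close> by simp
  consider "v < y" | "v = y" | "y < v" by linarith
  then show ?thesis
  proof cases
    case 1
    have "(chi (real k) has_real_derivative chi' (real k) x) (at x)" if "v < x" "x < y" for x
      using deriv that v y by simp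
    then obtain z where z: "v < z" "z < y" "chi (real k) y - chi (real k) v = (y - v) * chi' (real k) z"
      by (rule mvt_real[OF 1 cont[OF v(1) y(2)]])
    have "(y - v) * chi' (real k) z \<le> (y - v) * chi' (real k) y"
      using chi'_mono[OF k, of z y] z v y 1 by (intro mult_left_mono) auto
    then show ?thesis
      using z(3) by (simp add: algebra_simps)
  next
    case 3
    have "(chi (real k) has_real_derivative chi' (real k) x) (at x)" if "y < x" "x < v" for x
      using deriv that v y by simp
    then obtain z where z: "y < z" "z < v" "chi (real k) v - chi (real k) y = (v - y) * chi' (real k) z"
      by (rule mvt_real[OF 3 cont[OF less_imp_le[OF y(1)] v(2)]])
    have "(v - y) * chi' (real k) y \<le> (v - y) * chi' (real k) z"
      using chi'_mono[OF k, of y z] z v y 3 by (intro mult_left_mono) auto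
    then show ?thesis
      using z(3) by (simp add: algebra_simps)
  qed simp
qed

text \<open>Jensen's inequality for \<open>y\<close> as a convex combination of the \<open>v j\<close> and \<open>1/k\<close>,
  where \<open>chi k\<close> vanishes.\<close>

lemma chi_le_average:
  fixes k :: nat and S :: "'a set" and v :: "'a \<Rightarrow> real" and \<alpha> :: real
  assumes k: "k \<ge> 2" and S: "finite S"
    and v: "\<And>j. j \<in> S \<Longrightarrow> 0 \<le> v j \<and> v j \<le> 1 / real k"
    and y: "0 < y" "y \<le> 1 / real k"
    and \<alpha>: "0 \<le> \<alpha>" "card S * \<alpha> \<le> 1"
    and mean: "\<alpha> * (\<Sum>j\<in>S. v j) + (1 - card S * \<alpha>) * (1 / real k) = y"
  shows "chi (real k) y \<le> \<alpha> * (\<Sum>j\<in>S. chi (real k) (v j))"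
proof -
  define K where "K = real k"
  define \<beta> where "\<beta> = 1 - card S * \<alpha>"
  have "\<alpha> * (card S * chi K y + chi' K y * ((\<Sum>j\<in>S. v j) - card S * y))
      = \<alpha> * (\<Sum>j\<in>S. chi K y + chi' K y * (v j - y))"
    by (simp add: sum.distrib sum_distrib_left[symmetric] sum_subtractf)
  also have "\<dots> \<le> \<alpha> * (\<Sum>j\<in>S. chi K (v j))"
    using chi_above_tangent[OF k y] v \<alpha> by (intro mult_left_mono sum_mono) (auto simp: K_def)
  finally have tangents: "\<alpha> * (card S * chi K y + chi' K y * ((\<Sum>j\<in>S. v j) - card S * y))
      \<le> \<alpha> * (\<Sum>j\<in>S. chi K (v j))" .
  have tangent_inverse: "\<beta> * (chi K y + chi' K y * (1 / K - y)) \<le> 0"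
    using chi_above_tangent[OF k y, of "1 / real k"] chi_inverse[of K] k \<alpha>
    by (intro mult_nonneg_nonpos) (auto simp: K_def \<beta>_def)
  have "\<alpha> * (card S * chi K y + chi' K y * ((\<Sum>j\<in>S. v j) - card S * y))
      + \<beta> * (chi K y + chi' K y * (1 / K - y))
      = chi K y * (\<alpha> * card S + \<beta>)
        + chi' K y * (\<alpha> * (\<Sum>j\<in>S. v j) + \<beta> * (1 / K) - y * (\<alpha> * card S + \<beta>))"
    by (simp add: algebra_simps)
  also have "\<dots> = chi K y"
    using mean by (simp add: \<beta>_def K_def)
  finally show ?thesis
    using tangents tangent_inverse by (simp add: K_def)
qed

text \<open>\<open>chi_split K x\<close> is the sum of \<open>chi K\<close> over the vector \<open>(x, y, \<dots>, y)\<close> of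
  length \<open>K\<close>, where \<open>y = (1 - x) / (K - 1)\<close>.\<close>

definition chi_split :: "real \<Rightarrow> real \<Rightarrow> real" where
  "chi_split K x = chi K x + (K - 1) * chi K ((1 - x) / (K - 1))"

definition chi_split' :: "real \<Rightarrow> real \<Rightarrow> real" where
  "chi_split' K x = chi' K x - chi' K ((1 - x) / (K - 1))"

definition chi_split'' :: "real \<Rightarrow> real \<Rightarrow> real" where
  "chi_split'' K x = chi'' K x + chi'' K ((1 - x) / (K - 1)) / (K - 1)"

lemma has_real_derivative_chi_split:
  assumes K: "K \<ge> 2" and x: "0 < x" "x < 1"
  shows "(chi_split K has_real_derivative chi_split' K x) (at x)"
proof -
  have y: "0 < (1 - x) / (K - 1)" "(1 - x) / (K - 1) < 1"
    using K x by (auto simp: field_simps)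
  have inner: "((\<lambda>x. (1 - x) / (K - 1)) has_real_derivative (0 - 1) / (K - 1)) (at x)"
    by (intro DERIV_cdivide derivative_intros)
  have outer: "((\<lambda>x. chi K ((1 - x) / (K - 1))) has_real_derivative
      chi' K ((1 - x) / (K - 1)) * ((0 - 1) / (K - 1))) (at x)"
    by (rule DERIV_chain2[OF has_real_derivative_chi[OF y] inner])
  have "(chi_split K has_real_derivative
      chi' K x + (K - 1) * (chi' K ((1 - x) / (K - 1)) * ((0 - 1) / (K - 1)))) (at x)"
    unfolding chi_split_def [abs_def]
    by (intro DERIV_add DERIV_cmult has_real_derivative_chi[OF x] outer)
  then show ?thesis
    using K by (simp add: chi_split'_def)
qed

lemma has_real_derivative_chi_split':
  assumes K: "K \<ge> 2" and x: "0 < x" "x < 1"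
  shows "(chi_split' K has_real_derivative chi_split'' K x) (at x)"
proof -
  have y: "0 < (1 - x) / (K - 1)" "(1 - x) / (K - 1) < 1"
    using K x by (auto simp: field_simps)
  have inner: "((\<lambda>x. (1 - x) / (K - 1)) has_real_derivative (0 - 1) / (K - 1)) (at x)"
    by (intro DERIV_cdivide derivative_intros)
  have "((\<lambda>x. chi' K ((1 - x) / (K - 1))) has_real_derivative
      chi'' K ((1 - x) / (K - 1)) * ((0 - 1) / (K - 1))) (at x)"
    by (rule DERIV_chain2[OF has_real_derivative_chi'[OF y] inner])
  then have "(chi_split' K has_real_derivative
      chi'' K x - chi'' K ((1 - x) / (K - 1)) * ((0 - 1) / (K - 1))) (at x)"
    unfolding chi_split'_def [abs_def]
    by (intro derivative_intros has_real_derivative_chi'[OF x])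
  then show ?thesis
    using K by (simp add: chi_split''_def)
qed

lemma continuous_on_chi_split:
  assumes "K \<ge> 2" shows "continuous_on {0..1} (chi_split K)"
  unfolding chi_split_def [abs_def] chi_def
  using assms by (intro continuous_intros continuous_on_xlnx_comp) (auto simp: field_simps)

lemma chi_split_inverse: "K \<ge> 2 \<Longrightarrow> chi_split K (1 / K) = 0"
  and chi_split'_inverse: "K \<ge> 2 \<Longrightarrow> chi_split' K (1 / K) = 0"
proof -
  assume K: "K \<ge> 2"
  then have "(1 - 1 / K) / (K - 1) = 1 / K" by (simp add: field_simps)
  then show "chi_split K (1 / K) = 0" "chi_split' K (1 / K) = 0"
    using chi_inverse[of K] K by (simp_all add: chi_split_def chi_split'_def)
qed

lemma chi_split_1: "chi_split K 1 = 0"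
  by (simp add: chi_split_def)

lemma chi_split''_eq:
  assumes K: "K \<ge> 2" and x: "0 < x" "x < 1"
  shows "chi_split'' K x
    = (kappa K * (K - 2) - x * ((K - 1) * ln K - kappa K)) / (x * (1 - x) * (K - 2 + x))"
proof -
  define y where "y = (1 - x) / (K - 1)"
  have "y * (K - 1) = 1 - x" "(1 - y) * (K - 1) = K - 2 + x"
    using K by (simp_all add: y_def field_simps)
  then have "chi_split'' K x = kappa K / x - ln K / (1 - x) + (kappa K / (1 - x) - ln K / (K - 2 + x))"
    unfolding chi_split''_def y_def [symmetric] by (simp add: chi''_def diff_divide_distrib)
  also have "\<dots> = (kappa K * (1 - x) * (K - 2 + x) - ln K * x * (K - 2 + x)
      + kappa K * x * (K - 2 + x) - ln K * x * (1 - x)) / (x * (1 - x) * (K - 2 + x))"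
  proof -
    have "a \<noteq> 0 \<Longrightarrow> b \<noteq> 0 \<Longrightarrow> c \<noteq> 0 \<Longrightarrow> kappa K / a - ln K / b + (kappa K / b - ln K / c)
        = (kappa K * b * c - ln K * a * c + kappa K * a * c - ln K * a * b) / (a * b * c)" for a b c
      by (simp add: field_simps)
    moreover have "x \<noteq> 0" "1 - x \<noteq> 0" "K - 2 + x \<noteq> 0"
      using K x by auto
    ultimately show ?thesis
      by simp
  qed
  also have "\<dots> = (kappa K * (K - 2) - x * ((K - 1) * ln K - kappa K)) / (x * (1 - x) * (K - 2 + x))"
    by (simp add: algebra_simps)
  finally show ?thesis .
qed

text \<open>By \<open>chi_split''_eq\<close> the sign of \<open>chi_split'' K\<close> is that of a decreasing
  linear function, so \<open>chi_split' K\<close>, which vanishes at \<open>1/K\<close>, cannot become positive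
  again once it has turned negative.\<close>

lemma chi_split'_nonneg_before_positive:
  assumes K: "K \<ge> 2" and "1 / K \<le> \<eta>" "\<eta> \<le> \<xi>" "\<xi> < 1" and "0 < chi_split' K \<xi>"
  shows "0 \<le> chi_split' K \<eta>"
proof -
  define P where "P t = kappa K * (K - 2) - t * ((K - 1) * ln K - kappa K)" for t
  have P_antimono: "P t \<le> P s" if "s \<le> t" for s t
    using kappa_le_ln[OF K] that unfolding P_def by (simp add: mult_right_mono)
  have "0 < 1 / K" using K by simp
  then have range: "0 < t" "t < 1" if "1 / K \<le> t" "t \<le> \<xi>" for t
    using that assms by linarith+
  have sign: "0 \<le> chi_split'' K t \<longleftrightarrow> 0 \<le> P t" "chi_split'' K t \<le> 0 \<longleftrightarrow> P t \<le> 0"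
    if "0 < t" "t < 1" for t
  proof -
    have "0 < t * (1 - t) * (K - 2 + t)" using K that by simp
    then show "0 \<le> chi_split'' K t \<longleftrightarrow> 0 \<le> P t" "chi_split'' K t \<le> 0 \<longleftrightarrow> P t \<le> 0"
      using chi_split''_eq[OF K that] unfolding P_def
      by (simp_all add: zero_le_divide_iff divide_le_0_iff)
  qed
  show ?thesis
  proof (cases "P \<eta> \<le> 0")
    case True
    have "chi_split' K \<xi> \<le> chi_split' K \<eta>"
    proof (rule DERIV_nonpos_imp_nonincreasing[OF \<open>\<eta> \<le> \<xi>\<close>])
      fix t assume t: "\<eta> \<le> t" "t \<le> \<xi>"
      then have "0 < t" "t < 1" using range assms by auto
      moreover have "P t \<le> 0" using P_antimono[OF t(1)] True by simp
      ultimately show "\<exists>y. (chi_split' K has_real_derivative y) (at t) \<and> y \<le> 0"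
        using has_real_derivative_chi_split'[OF K] sign by blast
    qed
    then show ?thesis using assms by simp
  next
    case False
    have "chi_split' K (1 / K) \<le> chi_split' K \<eta>"
    proof (rule DERIV_nonneg_imp_nondecreasing[OF \<open>1 / K \<le> \<eta>\<close>])
      fix t assume t: "1 / K \<le> t" "t \<le> \<eta>"
      then have "0 < t" "t < 1" using range assms by auto
      moreover have "0 \<le> P t" using P_antimono[OF t(2)] False by simp
      ultimately show "\<exists>y. (chi_split' K has_real_derivative y) (at t) \<and> 0 \<le> y"
        using has_real_derivative_chi_split'[OF K] sign by blast
    qed
    then show ?thesis using chi_split'_inverse[OF K] by simp
  qed
qed

lemma chi_split_nonneg:
  assumes K: "K \<ge> 2" and x: "1 / K \<le> x" "x \<le> 1"
  shows "0 \<le> chi_split K x"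
proof (rule ccontr)
  assume neg: "\<not> 0 \<le> chi_split K x"
  have "0 < 1 / K" using K by simp
  have x1: "1 / K < x" using neg x chi_split_inverse[OF K] by (cases "x = 1 / K") auto
  have x2: "x < 1" using neg x chi_split_1 by (cases "x = 1") auto
  have x0: "0 \<le> x" using x1 \<open>0 < 1 / K\<close> by linarith
  have cont: "continuous_on {a..b} (chi_split K)" if "0 \<le> a" "b \<le> 1" for a b
    by (rule continuous_on_subset[OF continuous_on_chi_split[OF K]]) (use that in auto)
  have deriv: "(chi_split K has_real_derivative chi_split' K t) (at t)"
    if "1 / K < t" "t < 1" for t
    using has_real_derivative_chi_split[OF K order.strict_trans[OF \<open>0 < 1 / K\<close> that(1)] that(2)] .
  have "(chi_split K has_real_derivative chi_split' K t) (at t)" if "1 / K < t" "t < x" for t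
    using deriv that x2 by simp
  then obtain z1 where z1: "1 / K < z1" "z1 < x"
      "chi_split K x - chi_split K (1 / K) = (x - 1 / K) * chi_split' K z1"
    by (rule mvt_real[OF x1 cont[OF less_imp_le[OF \<open>0 < 1 / K\<close>] x(2)]])
  have "(chi_split K has_real_derivative chi_split' K t) (at t)" if "x < t" "t < 1" for t
    using deriv that x1 by simp
  then obtain z2 where z2: "x < z2" "z2 < 1" "chi_split K 1 - chi_split K x = (1 - x) * chi_split' K z2"
    by (rule mvt_real[OF x2 cont[OF x0 order_refl]])
  have "(x - 1 / K) * chi_split' K z1 < 0"
    using z1(3) neg chi_split_inverse[OF K] by simp
  then have "chi_split' K z1 < 0"
    using x1 by (simp add: mult_less_0_iff)
  moreover have "0 < (1 - x) * chi_split' K z2"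
    using z2(3) neg chi_split_1 by simp
  then have "0 < chi_split' K z2"
    using x2 by (simp add: zero_less_mult_iff)
  ultimately show False
    using chi_split'_nonneg_before_positive[OF K, of z1 z2] z1 z2 by simp
qed

lemma chi_large_coordinate:
  fixes k :: nat and S :: "'a set" and v :: "'a \<Rightarrow> real"
  assumes k: "k \<ge> 2" and S: "finite S" "card S + 1 \<le> k"
    and v: "\<And>j. j \<in> S \<Longrightarrow> 0 \<le> v j \<and> v j \<le> 1 / real k"
    and x: "1 / real k < x" "x < 1"
    and D: "x - 1 / real k \<le> D" and sum_v: "(\<Sum>j\<in>S. v j) = card S / real k - D"
  shows "0 \<le> chi (real k) x + (x - 1 / real k) / D * (\<Sum>j\<in>S. chi (real k) (v j))"
proof -
  define K where "K = real k"
  define y where "y = (1 - x) / (K - 1)"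
  define \<alpha> where "\<alpha> = (x - 1 / K) / (D * (K - 1))"
  have K: "K \<ge> 2" using k by (simp add: K_def)
  have D0: "0 < D" using x D by (simp add: K_def)
  have y: "0 < y" "y \<le> 1 / real k"
    using K x by (auto simp: y_def K_def field_simps)
  have "0 \<le> \<alpha>" using x D0 K by (simp add: \<alpha>_def K_def)
  moreover have "card S * \<alpha> \<le> 1"
  proof -
    have "card S * \<alpha> = card S * (x - 1 / K) / (D * (K - 1))" by (simp add: \<alpha>_def)
    also have "\<dots> \<le> (K - 1) * D / (D * (K - 1))"
      using S x D K by (intro divide_right_mono mult_mono) (auto simp: K_def)
    also have "\<dots> = 1" using D0 K by simp
    finally show ?thesis .
  qed
  moreover have "\<alpha> * (\<Sum>j\<in>S. v j) + (1 - card S * \<alpha>) * (1 / real k) = 1 / K - \<alpha> * D"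
    by (simp add: sum_v K_def algebra_simps)
  moreover have "\<alpha> * D = (x - 1 / K) / (K - 1)"
    using D0 by (simp add: \<alpha>_def)
  moreover have "1 / K - (x - 1 / K) / (K - 1) = y"
    using K by (simp add: y_def field_simps)
  ultimately have "chi K y \<le> \<alpha> * (\<Sum>j\<in>S. chi K (v j))"
    using chi_le_average[OF k S(1) v y] by (simp add: K_def)
  then have "(K - 1) * chi K y \<le> ((K - 1) * \<alpha>) * (\<Sum>j\<in>S. chi K (v j))"
    using K by (simp add: mult_left_mono)
  also have "(K - 1) * \<alpha> = (x - 1 / K) / D"
    using K by (simp add: \<alpha>_def)
  finally have "(K - 1) * chi K y \<le> (x - 1 / K) / D * (\<Sum>j\<in>S. chi K (v j))" .
  moreover have "0 \<le> chi K x + (K - 1) * chi K y"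
    using chi_split_nonneg[OF K, of x] x by (simp add: chi_split_def y_def K_def)
  ultimately show ?thesis
    by (simp add: K_def)
qed

lemma chi_sum_nonneg_unbalanced:
  fixes k :: nat and R :: "'a set" and w :: "'a \<Rightarrow> real"
  assumes k: "k \<ge> 2" and R: "finite R" "card R = k"
    and w: "\<And>i. i \<in> R \<Longrightarrow> 0 \<le> w i \<and> w i < 1" and sum_w: "(\<Sum>i\<in>R. w i) = 1"
    and large: "\<exists>i\<in>R. 1 / real k < w i"
  shows "0 \<le> (\<Sum>i\<in>R. chi (real k) (w i))"
proof -
  define s where "s = 1 / real k"
  define L where "L = {i\<in>R. s < w i}"
  define S where "S = {i\<in>R. w i \<le> s}"
  define D where "D = (\<Sum>i\<in>L. w i - s)"
  define T where "T = (\<Sum>j\<in>S. chi (real k) (w j))"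
  have fin: "finite L" "finite S" and disj: "L \<inter> S = {}" and R_eq: "R = L \<union> S"
    using R by (auto simp: L_def S_def)
  have "L \<noteq> {}" using large by (auto simp: L_def s_def)
  then have D_pos: "0 < D"
    unfolding D_def using fin by (intro sum_pos) (auto simp: L_def)
  have "0 = (\<Sum>i\<in>R. w i - s)"
    using sum_w R k by (simp add: sum_subtractf s_def)
  also have "\<dots> = D + (\<Sum>i\<in>S. w i - s)"
    unfolding D_def R_eq using fin disj by (simp add: sum.union_disjoint)
  finally have sum_S: "(\<Sum>j\<in>S. w j) = card S / real k - D"
    by (simp add: sum_subtractf s_def)
  have "card L + card S = k"
    using card_Un_disjoint[OF fin disj] R R_eq by simp
  moreover have "card L \<ge> 1"
    using \<open>L \<noteq> {}\<close> fin by (simp add: Suc_le_eq card_gt_0_iff)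
  ultimately have card_S: "card S + 1 \<le> k" by simp
  have "- ((w i - s) / D * T) \<le> chi (real k) (w i)" if i: "i \<in> L" for i
  proof -
    have "w i - s \<le> D"
      unfolding D_def using member_le_sum[of i L "\<lambda>i. w i - s"] i fin by (auto simp: L_def)
    then show ?thesis
      using chi_large_coordinate[OF k fin(2) card_S, of w "w i" D] i w sum_S
      by (auto simp: L_def S_def s_def T_def)
  qed
  then have "(\<Sum>i\<in>L. - ((w i - s) / D * T)) \<le> (\<Sum>i\<in>L. chi (real k) (w i))"
    by (rule sum_mono)
  moreover have "(\<Sum>i\<in>L. - ((w i - s) / D * T)) = - T"
    using D_pos by (simp add: D_def sum_negf flip: sum_distrib_right sum_divide_distrib)
  moreover have "(\<Sum>i\<in>R. chi (real k) (w i)) = (\<Sum>i\<in>L. chi (real k) (w i)) + T"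
    unfolding T_def R_eq using fin disj by (simp add: sum.union_disjoint)
  ultimately show ?thesis
    by simp
qed

lemma chi_sum_nonneg:
  fixes k :: nat and R :: "'a set" and w :: "'a \<Rightarrow> real"
  assumes k: "k \<ge> 2" and R: "finite R" "card R = k"
    and w: "\<And>i. i \<in> R \<Longrightarrow> 0 \<le> w i" and sum_w: "(\<Sum>i\<in>R. w i) = 1"
  shows "0 \<le> (\<Sum>i\<in>R. chi (real k) (w i))"
proof -
  have w_le_1: "w i \<le> 1" if "i \<in> R" for i
    using member_le_sum[of i R w] that w R sum_w by auto
  consider (vertex) i where "i \<in> R" "w i = 1"
    | (uniform) "\<forall>i\<in>R. w i \<le> 1 / real k" "\<forall>i\<in>R. w i < 1"
    | (unbalanced) "\<exists>i\<in>R. 1 / real k < w i" "\<forall>i\<in>R. w i < 1"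
    using w_le_1 by (metis not_le order_le_less)
  then show ?thesis
  proof cases
    case vertex
    then have "(\<Sum>j\<in>R - {i}. w j) = 0"
      using sum_w R sum.remove[of R i w] by simp
    then have "\<forall>j\<in>R - {i}. w j = 0"
      using sum_nonneg_eq_0_iff[of "R - {i}" w] R w by auto
    then have "\<forall>j\<in>R. chi (real k) (w j) = 0"
      using vertex by (metis Diff_iff chi_0 chi_1 singletonD)
    then show ?thesis by simp
  next
    case uniform
    have "(\<Sum>i\<in>R. 1 / real k - w i) = 0"
      using sum_w R k by (simp add: sum_subtractf)
    then have "\<forall>i\<in>R. w i = 1 / real k"
      using sum_nonneg_eq_0_iff[of R "\<lambda>i. 1 / real k - w i"] R uniform by auto
    then show ?thesis
      using chi_inverse[of "real k"] k by simp
  next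
    case unbalanced
    then show ?thesis
      using chi_sum_nonneg_unbalanced[OF k R _ sum_w] w by simp
  qed
qed

section \<open>One column of the Laplace expansion\<close>

lemma entropy_le_ln_card:
  fixes R :: "'a set" and w :: "'a \<Rightarrow> real"
  assumes R: "finite R" and w: "\<And>i. i \<in> R \<Longrightarrow> 0 \<le> w i" and sum_w: "(\<Sum>i\<in>R. w i) = 1"
  shows "- (\<Sum>i\<in>R. xlnx (w i)) \<le> ln (card R)"
proof -
  define k where "k = real (card R)"
  have "R \<noteq> {}" using sum_w by auto
  then have k: "0 < k" using R by (simp add: k_def card_gt_0_iff)
  have "- xlnx (w i) - w i * ln k \<le> 1 / k - w i" if i: "i \<in> R" for i
  proof (cases "w i = 0")
    case False
    then have wi: "0 < w i" using w[OF i] by auto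
    have "w i * ln (1 / (k * w i)) \<le> w i * (1 / (k * w i) - 1)"
      using wi k by (intro mult_left_mono ln_le_minus_one) auto
    moreover have "ln (1 / (k * w i)) = - ln k - ln (w i)"
      using wi k by (simp add: ln_div ln_mult)
    moreover have "w i * (1 / (k * w i) - 1) = 1 / k - w i"
      using wi by (simp add: field_simps)
    ultimately show ?thesis
      by (simp add: xlnx_def algebra_simps)
  qed (use k in simp)
  then have "(\<Sum>i\<in>R. - xlnx (w i) - w i * ln k) \<le> (\<Sum>i\<in>R. 1 / k - w i)"
    by (rule sum_mono)
  then show ?thesis
    using sum_w k by (simp add: sum_subtractf sum_negf flip: sum_distrib_right) (simp add: k_def)
qed

text \<open>By \<open>chi_sum_nonneg\<close> the sum of the binary entropies \<open>-(1 - w\<^sub>i) ln (1 - w\<^sub>i)\<close>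
  is at least \<open>kappa k / ln k\<close> times the entropy, and the entropy is at most \<open>ln k\<close>.\<close>

lemma entropy_binary_entropy_bound:
  fixes R :: "'a set" and w :: "'a \<Rightarrow> real" and t :: real
  assumes R: "2 \<le> card R" and w: "\<And>i. i \<in> R \<Longrightarrow> 0 \<le> w i" and sum_w: "(\<Sum>i\<in>R. w i) = 1"
  shows "t * - (\<Sum>i\<in>R. xlnx (w i)) + (\<Sum>i\<in>R. xlnx (1 - w i))
    \<le> max 0 (t * ln (card R) - kappa (card R))"
proof -
  define H where "H = - (\<Sum>i\<in>R. xlnx (w i))"
  define Q where "Q = (\<Sum>i\<in>R. xlnx (1 - w i))"
  define L where "L = ln (card R)"
  define c where "c = kappa (card R)"
  have fin: "finite R" using R by (metis card.infinite not_numeral_le_zero)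
  have L: "0 < L" using R by (simp add: L_def)
  have "0 \<le> (\<Sum>i\<in>R. chi (card R) (w i))"
    by (rule chi_sum_nonneg[OF R fin refl w sum_w])
  then have binary: "c * H \<le> L * - Q"
    by (simp add: chi_def H_def Q_def L_def c_def sum_subtractf sum_distrib_left sum_negf)
  have "w i \<le> 1" if "i \<in> R" for i
    using member_le_sum[of i R w] that w fin sum_w by auto
  then have H: "0 \<le> H" "H \<le> L"
    using xlnx_nonpos w entropy_le_ln_card[OF fin w sum_w] by (auto simp: H_def L_def sum_nonpos)
  have "L * (t * H + Q) \<le> H * (t * L - c)"
    using binary by (simp add: algebra_simps)
  also have "\<dots> \<le> L * max 0 (t * L - c)"
  proof (cases "t * L - c \<le> 0")
    case True
    then show ?thesis using H L by (simp add: mult_nonneg_nonpos)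
  next
    case False
    then show ?thesis using H L by (simp add: mult_right_mono mult.commute)
  qed
  finally show ?thesis
    using L by (simp add: H_def Q_def L_def c_def)
qed

lemma binary_gibbs:
  fixes w x :: real
  assumes w: "0 \<le> w" "w \<le> 1" and x: "0 \<le> x" "x < 1" and "0 < w \<Longrightarrow> 0 < x"
  shows "w * ln x + (1 - w) * ln (1 - x) \<le> xlnx w + xlnx (1 - w)"
proof -
  consider "w = 0" | "w = 1" | "0 < w" "w < 1" using w by linarith
  then show ?thesis
  proof cases
    case 1
    then show ?thesis using x by simp
  next
    case 2
    then show ?thesis using x assms(5) by simp
  next
    case 3
    have x0: "0 < x" using 3 assms(5) by simp
    have "w * ln (x / w) + (1 - w) * ln ((1 - x) / (1 - w))
        \<le> w * (x / w - 1) + (1 - w) * ((1 - x) / (1 - w) - 1)"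
      using 3 x x0 by (intro add_mono mult_left_mono ln_le_minus_one) auto
    also have "\<dots> = 0"
      using 3 by (simp add: field_simps)
    finally show ?thesis
      using 3 x x0 by (simp add: xlnx_def ln_div algebra_simps)
  qed
qed

lemma ln_sum_eq_entropy:
  fixes R :: "'a set" and a :: "'a \<Rightarrow> real"
  assumes R: "finite R" and a: "\<And>i. i \<in> R \<Longrightarrow> 0 \<le> a i" and G: "0 < (\<Sum>i\<in>R. a i)"
  defines "w i \<equiv> a i / (\<Sum>i\<in>R. a i)"
  shows "ln (\<Sum>i\<in>R. a i) = (\<Sum>i\<in>R. w i * ln (a i)) - (\<Sum>i\<in>R. xlnx (w i))"
proof -
  define G where "G = (\<Sum>i\<in>R. a i)"
  have "w i * ln (a i) - xlnx (w i) = w i * ln G" if "i \<in> R" for i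
    using a[OF that] G by (cases "a i = 0") (auto simp: w_def G_def xlnx_def ln_div algebra_simps)
  then have "(\<Sum>i\<in>R. w i * ln (a i)) - (\<Sum>i\<in>R. xlnx (w i)) = (\<Sum>i\<in>R. w i) * ln G"
    by (simp add: sum_distrib_right flip: sum_subtractf)
  also have "(\<Sum>i\<in>R. w i) = 1"
    using G by (simp add: w_def flip: sum_divide_distrib)
  finally show ?thesis by (simp add: G_def)
qed

lemma sum_weighted_sum_others:
  fixes R :: "'a set" and w f :: "'a \<Rightarrow> real"
  assumes "finite R" and "(\<Sum>i\<in>R. w i) = 1"
  shows "(\<Sum>i\<in>R. w i * (\<Sum>l\<in>R - {i}. f l)) = (\<Sum>i\<in>R. (1 - w i) * f i)"
proof -
  have "(\<Sum>i\<in>R. w i * (\<Sum>l\<in>R - {i}. f l)) = (\<Sum>i\<in>R. w i * ((\<Sum>l\<in>R. f l) - f i))"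
    using assms by (intro sum.cong) (auto simp: sum_diff1)
  also have "\<dots> = (\<Sum>i\<in>R. (1 - w i) * f i)"
    using assms by (simp add: algebra_simps sum_subtractf sum.distrib flip: sum_distrib_right)
  finally show ?thesis .
qed

text \<open>For \<open>p = 1\<close> this is the probability that exactly one of independent events
  with probabilities \<open>x i\<close> occurs.\<close>

definition exactly_one :: "real \<Rightarrow> 'a set \<Rightarrow> ('a \<Rightarrow> real) \<Rightarrow> real" where
  "exactly_one p R x = (\<Sum>i\<in>R. x i powr (1 / p) * (\<Prod>l\<in>R - {i}. (1 - x l) powr (1 / p)))"

definition step_factor :: "real \<Rightarrow> nat \<Rightarrow> real" where
  "step_factor p k = exp (max 0 ((p - 1) * ln (real k) - kappa (real k)) / p)"

lemma one_le_step_factor: "0 < p \<Longrightarrow> 1 \<le> step_factor p k"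
  by (simp add: step_factor_def)

lemma ln_exactly_one_term:
  fixes R :: "'a set" and x :: "'a \<Rightarrow> real"
  assumes p: "0 < p" and R: "finite R" and x: "0 < x i" and x_less: "\<And>l. l \<in> R - {i} \<Longrightarrow> x l < 1"
  shows "p * ln (x i powr (1 / p) * (\<Prod>l\<in>R - {i}. (1 - x l) powr (1 / p)))
    = ln (x i) + (\<Sum>l\<in>R - {i}. ln (1 - x l))"
proof -
  have pos: "0 < (1 - x l) powr (1 / p)" if "l \<in> R - {i}" for l
    using x_less[OF that] by simp
  have "0 < (\<Prod>l\<in>R - {i}. (1 - x l) powr (1 / p))"
    by (rule prod_pos) (rule pos)
  moreover have "ln (\<Prod>l\<in>R - {i}. (1 - x l) powr (1 / p)) = (\<Sum>l\<in>R - {i}. ln ((1 - x l) powr (1 / p)))"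
    using R pos by (intro ln_prod) (simp, metis less_irrefl)
  ultimately have "ln (x i powr (1 / p) * (\<Prod>l\<in>R - {i}. (1 - x l) powr (1 / p)))
      = ln (x i powr (1 / p)) + (\<Sum>l\<in>R - {i}. ln ((1 - x l) powr (1 / p)))"
    using x by (simp add: ln_mult)
  also have "\<dots> = (ln (x i) + (\<Sum>l\<in>R - {i}. ln (1 - x l))) / p"
    by (simp add: add_divide_distrib sum_divide_distrib)
  finally show ?thesis
    using p by simp
qed

lemma ln_exactly_one_le:
  fixes R :: "'a set" and x :: "'a \<Rightarrow> real"
  assumes p: "1 < p" and R: "2 \<le> card R" and x: "\<And>i. i \<in> R \<Longrightarrow> 0 \<le> x i \<and> x i < 1"
    and pos: "0 < exactly_one p R x"
  shows "p * ln (exactly_one p R x) \<le> max 0 ((p - 1) * ln (card R) - kappa (card R))"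
proof -
  define G where "G = exactly_one p R x"
  define a where "a i = x i powr (1 / p) * (\<Prod>l\<in>R - {i}. (1 - x l) powr (1 / p))" for i
  define w where "w i = a i / G" for i
  have fin: "finite R" using R by (metis card.infinite not_numeral_le_zero)
  have G_eq: "G = (\<Sum>i\<in>R. a i)" by (simp add: G_def exactly_one_def a_def)
  have G_pos: "0 < G" using pos by (simp add: G_def)
  have a: "0 \<le> a i" for i by (simp add: a_def prod_nonneg)
  have w: "0 \<le> w i" for i using a G_pos by (simp add: w_def)
  have sum_w: "(\<Sum>i\<in>R. w i) = 1"
    using G_pos by (simp add: w_def G_eq flip: sum_divide_distrib)
  have w_le_1: "w i \<le> 1" if "i \<in> R" for i
    using member_le_sum[of i R w] that w fin sum_w by auto
  have ln_a: "w i * (p * ln (a i)) = w i * (ln (x i) + (\<Sum>l\<in>R - {i}. ln (1 - x l)))"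
    if i: "i \<in> R" for i
  proof (cases "w i = 0")
    case False
    then have "0 < a i" using a[of i] by (auto simp: w_def)
    then have "0 < x i" using x[OF i] by (cases "x i = 0") (auto simp: a_def)
    then show ?thesis
      using ln_exactly_one_term[of p R x i] p fin x by (simp add: a_def)
  qed simp
  have "ln G = (\<Sum>i\<in>R. w i * ln (a i)) - (\<Sum>i\<in>R. xlnx (w i))"
    using ln_sum_eq_entropy[of R a] fin a G_pos by (simp add: G_eq w_def)
  then have "p * ln G = (\<Sum>i\<in>R. w i * (p * ln (a i))) - p * (\<Sum>i\<in>R. xlnx (w i))"
    by (simp add: right_diff_distrib sum_distrib_left mult.left_commute)
  also have "(\<Sum>i\<in>R. w i * (p * ln (a i))) = (\<Sum>i\<in>R. w i * ln (x i) + (1 - w i) * ln (1 - x i))"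
    using ln_a sum_weighted_sum_others[OF fin sum_w, of "\<lambda>l. ln (1 - x l)"]
    by (simp add: distrib_left sum.distrib)
  also have "\<dots> \<le> (\<Sum>i\<in>R. xlnx (w i) + xlnx (1 - w i))"
  proof (rule sum_mono, rule binary_gibbs)
    fix i assume i: "i \<in> R"
    show "0 \<le> w i" "w i \<le> 1" "0 \<le> x i" "x i < 1" using w w_le_1 x i by auto
    assume "0 < w i"
    then have "0 < a i" using G_pos by (simp add: w_def zero_less_divide_iff)
    then show "0 < x i" using x[OF i] by (cases "x i = 0") (auto simp: a_def)
  qed
  also have "\<dots> - p * (\<Sum>i\<in>R. xlnx (w i))
      = (p - 1) * - (\<Sum>i\<in>R. xlnx (w i)) + (\<Sum>i\<in>R. xlnx (1 - w i))"
    by (simp add: sum.distrib algebra_simps)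
  also have "\<dots> \<le> max 0 ((p - 1) * ln (card R) - kappa (card R))"
    by (rule entropy_binary_entropy_bound[OF R w sum_w])
  finally show ?thesis by (simp add: G_def)
qed

lemma exactly_one_term_bounds:
  fixes R :: "'a set" and x :: "'a \<Rightarrow> real"
  assumes p: "0 < p" and x: "\<And>l. l \<in> R \<Longrightarrow> 0 \<le> x l \<and> x l \<le> 1" and i: "i \<in> R"
  shows "0 \<le> x i powr (1 / p) * (\<Prod>l\<in>R - {i}. (1 - x l) powr (1 / p))
    \<and> x i powr (1 / p) * (\<Prod>l\<in>R - {i}. (1 - x l) powr (1 / p)) \<le> 1"
proof -
  have powr_le_1: "t powr (1 / p) \<le> 1" if "0 \<le> t" "t \<le> 1" for t
    using that p powr_mono2[of "1 / p" t 1] by simp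
  have "(\<Prod>l\<in>R - {i}. (1 - x l) powr (1 / p)) \<le> 1"
    using x powr_le_1 by (intro prod_le_1) auto
  then show ?thesis
    using x[OF i] powr_le_1[of "x i"] by (auto simp: prod_nonneg intro: mult_le_one)
qed

lemma exactly_one_le_step_factor:
  fixes R :: "'a set" and x :: "'a \<Rightarrow> real"
  assumes p: "1 < p" and R: "finite R" and x: "\<And>i. i \<in> R \<Longrightarrow> 0 \<le> x i \<and> x i \<le> 1"
  shows "exactly_one p R x \<le> step_factor p (card R)"
proof -
  define a where "a i = x i powr (1 / p) * (\<Prod>l\<in>R - {i}. (1 - x l) powr (1 / p))" for i
  have G_eq: "exactly_one p R x = (\<Sum>i\<in>R. a i)" by (simp add: exactly_one_def a_def)
  have a: "0 \<le> a i \<and> a i \<le> 1" if "i \<in> R" for i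
    using exactly_one_term_bounds[of p R x i] p x that by (simp add: a_def)
  have step: "1 \<le> step_factor p (card R)" using p one_le_step_factor by simp
  have single_term: "exactly_one p R x \<le> step_factor p (card R)"
    if i: "i \<in> R" and "\<forall>j\<in>R - {i}. a j = 0" for i
    using that sum.remove[OF R i, of a] a[OF i] step by (simp add: G_eq)
  consider "card R = 0" | "card R = 1" | "\<exists>i\<in>R. x i = 1" | "2 \<le> card R" "\<forall>i\<in>R. x i < 1"
    using x by force
  then show ?thesis
  proof cases
    case 1
    then show ?thesis using R step by (simp add: exactly_one_def)
  next
    case 2
    then obtain i where "R = {i}" by (auto simp: card_Suc_eq)
    then show ?thesis by (intro single_term) auto
  next
    case 3
    then obtain i where i: "i \<in> R" "x i = 1" by auto
    have "a j = 0" if "j \<in> R - {i}" for j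
      using R that i by (auto simp: a_def intro!: prod_zero bexI[of _ i])
    then show ?thesis by (intro single_term[OF i(1)]) auto
  next
    case 4
    show ?thesis
    proof (cases "exactly_one p R x = 0")
      case False
      then have G: "0 < exactly_one p R x" using a by (simp add: G_eq sum_nonneg order_le_neq_trans)
      have "p * ln (exactly_one p R x) \<le> max 0 ((p - 1) * ln (card R) - kappa (card R))"
        using ln_exactly_one_le[OF p 4(1) _ G] 4(2) x by auto
      then have "ln (exactly_one p R x) \<le> ln (step_factor p (card R))"
        using p by (simp add: step_factor_def field_simps)
      then show ?thesis using G step by simp
    qed (use step in simp)
  qed
qed

section \<open>Permanents of blocks\<close>

text \<open>Bijections from \<open>R\<close> onto \<open>C\<close>, made unique outside \<open>R\<close> by fixing every point
  there.\<close>

definition matchings :: "'a set \<Rightarrow> 'a set \<Rightarrow> ('a \<Rightarrow> 'a) set" where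
  "matchings R C = {\<sigma>. bij_betw \<sigma> R C \<and> (\<forall>x. x \<notin> R \<longrightarrow> \<sigma> x = x)}"

definition per_on :: "'a set \<Rightarrow> 'a set \<Rightarrow> ('a \<Rightarrow> 'a \<Rightarrow> real) \<Rightarrow> real" where
  "per_on R C A = (\<Sum>\<sigma>\<in>matchings R C. \<Prod>i\<in>R. A i (\<sigma> i))"

lemma finite_matchings:
  assumes "finite R" "finite C" shows "finite (matchings R C)"
proof -
  have "matchings R C \<subseteq> (\<lambda>f x. if x \<in> R then f x else x) ` (R \<rightarrow>\<^sub>E C)"
  proof
    fix \<sigma> assume \<sigma>: "\<sigma> \<in> matchings R C"
    then have "restrict \<sigma> R \<in> R \<rightarrow>\<^sub>E C"
      by (auto simp: matchings_def bij_betw_def)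
    moreover have "\<sigma> = (\<lambda>x. if x \<in> R then restrict \<sigma> R x else x)"
      using \<sigma> by (auto simp: matchings_def fun_eq_iff)
    ultimately show "\<sigma> \<in> (\<lambda>f x. if x \<in> R then f x else x) ` (R \<rightarrow>\<^sub>E C)" by blast
  qed
  moreover have "finite (R \<rightarrow>\<^sub>E C)"
    using assms by (simp add: finite_PiE)
  ultimately show ?thesis
    using finite_subset by blast
qed

lemma matchings_lessThan: "matchings {..<n} {..<n} = {\<sigma>. \<sigma> permutes {..<n}}"
  by (auto simp: matchings_def permutes_imp_bij permutes_not_in intro: bij_imp_permutes)

lemma per_eq_per_on: "per n A = per_on {..<n} {..<n} A"
  by (simp add: per_def per_on_def matchings_lessThan)

lemma per_on_empty [simp]: "per_on {} {} (A :: 'a \<Rightarrow> 'a \<Rightarrow> real) = 1"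
proof -
  have "matchings {} {} = {id :: 'a \<Rightarrow> 'a}"
    by (auto simp: matchings_def fun_eq_iff)
  then show ?thesis by (simp add: per_on_def)
qed

lemma matchings_remove:
  assumes R: "i \<in> R" and C: "j \<in> C"
  shows "bij_betw (\<lambda>\<tau>. \<tau>(i := j)) (matchings (R - {i}) (C - {j})) {\<sigma> \<in> matchings R C. \<sigma> i = j}"
proof (rule bij_betw_byWitness[where f' = "\<lambda>\<sigma>. \<sigma>(i := i)"])
  show "\<forall>\<tau>\<in>matchings (R - {i}) (C - {j}). (\<tau>(i := j))(i := i) = \<tau>"
    by (auto simp: matchings_def fun_eq_iff)
  show "\<forall>\<sigma>\<in>{\<sigma> \<in> matchings R C. \<sigma> i = j}. (\<sigma>(i := i))(i := j) = \<sigma>"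
    by auto
  show "(\<lambda>\<tau>. \<tau>(i := j)) ` matchings (R - {i}) (C - {j}) \<subseteq> {\<sigma> \<in> matchings R C. \<sigma> i = j}"
  proof (rule image_subsetI)
    fix \<tau> assume "\<tau> \<in> matchings (R - {i}) (C - {j})"
    then have \<tau>: "bij_betw \<tau> (R - {i}) (C - {j})" "\<forall>x. x \<notin> R - {i} \<longrightarrow> \<tau> x = x"
      unfolding matchings_def by simp_all
    have "bij_betw (\<tau>(i := j)) (R - {i}) (C - {j})"
      using \<tau>(1) by (rule bij_betw_cong[THEN iffD1, rotated]) auto
    then have "bij_betw (\<tau>(i := j)) ((R - {i}) \<union> {i}) ((C - {j}) \<union> {j})"
      by (rule bij_betw_combine) (auto simp: bij_betw_def)
    moreover have "(R - {i}) \<union> {i} = R" "(C - {j}) \<union> {j} = C"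
      using R C by auto
    ultimately show "\<tau>(i := j) \<in> {\<sigma> \<in> matchings R C. \<sigma> i = j}"
      using \<tau>(2) R by (auto simp: matchings_def)
  qed
  show "(\<lambda>\<sigma>. \<sigma>(i := i)) ` {\<sigma> \<in> matchings R C. \<sigma> i = j} \<subseteq> matchings (R - {i}) (C - {j})"
  proof (rule image_subsetI)
    fix \<sigma> assume "\<sigma> \<in> {\<sigma> \<in> matchings R C. \<sigma> i = j}"
    then have \<sigma>: "bij_betw \<sigma> R C" "\<forall>x. x \<notin> R \<longrightarrow> \<sigma> x = x" and \<sigma>i: "\<sigma> i = j"
      unfolding matchings_def by simp_all
    have "bij_betw \<sigma> {i} {j}"
      using \<sigma>i by (simp add: bij_betw_def)
    then have "bij_betw \<sigma> (R - {i}) (C - {j})"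
      by (rule bij_betw_DiffI[OF \<sigma>(1)]) (use R C in auto)
    then have "bij_betw (\<sigma>(i := i)) (R - {i}) (C - {j})"
      by (rule bij_betw_cong[THEN iffD1, rotated]) auto
    then show "\<sigma>(i := i) \<in> matchings (R - {i}) (C - {j})"
      using \<sigma>(2) by (auto simp: matchings_def)
  qed
qed

lemma per_on_expand_row:
  assumes R: "finite R" "i \<in> R" and C: "finite C"
  shows "per_on R C A = (\<Sum>j\<in>C. A i j * per_on (R - {i}) (C - {j}) A)"
proof -
  have part: "matchings R C = (\<Union>j\<in>C. {\<sigma> \<in> matchings R C. \<sigma> i = j})"
    using R by (auto simp: matchings_def bij_betw_def)
  have "per_on R C A = (\<Sum>j\<in>C. \<Sum>\<sigma>\<in>{\<sigma> \<in> matchings R C. \<sigma> i = j}. \<Prod>l\<in>R. A l (\<sigma> l))"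
    unfolding per_on_def
    by (subst part, rule sum.UNION_disjoint) (use C finite_matchings[OF R(1) C] in auto)
  also have "\<dots> = (\<Sum>j\<in>C. A i j * per_on (R - {i}) (C - {j}) A)"
  proof (rule sum.cong[OF refl])
    fix j assume j: "j \<in> C"
    have "(\<Sum>\<sigma>\<in>{\<sigma> \<in> matchings R C. \<sigma> i = j}. \<Prod>l\<in>R. A l (\<sigma> l))
        = (\<Sum>\<tau>\<in>matchings (R - {i}) (C - {j}). \<Prod>l\<in>R. A l ((\<tau>(i := j)) l))"
      by (rule sum.reindex_bij_betw[OF matchings_remove[OF R(2) j], symmetric])
    also have "\<dots> = (\<Sum>\<tau>\<in>matchings (R - {i}) (C - {j}). A i j * (\<Prod>l\<in>R - {i}. A l (\<tau> l)))"
    proof (rule sum.cong[OF refl])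
      fix \<tau> :: "'a \<Rightarrow> 'a"
      have "(\<Prod>l\<in>R. A l ((\<tau>(i := j)) l)) = A i j * (\<Prod>l\<in>R - {i}. A l ((\<tau>(i := j)) l))"
        using prod.remove[OF R, of "\<lambda>l. A l ((\<tau>(i := j)) l)"] by simp
      also have "(\<Prod>l\<in>R - {i}. A l ((\<tau>(i := j)) l)) = (\<Prod>l\<in>R - {i}. A l (\<tau> l))"
        by (rule prod.cong) auto
      finally show "(\<Prod>l\<in>R. A l ((\<tau>(i := j)) l)) = A i j * (\<Prod>l\<in>R - {i}. A l (\<tau> l))" .
    qed
    also have "\<dots> = A i j * per_on (R - {i}) (C - {j}) A"
      by (simp add: per_on_def sum_distrib_left)
    finally show "(\<Sum>\<sigma>\<in>{\<sigma> \<in> matchings R C. \<sigma> i = j}. \<Prod>l\<in>R. A l (\<sigma> l))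
        = A i j * per_on (R - {i}) (C - {j}) A" .
  qed
  finally show ?thesis .
qed

lemma abs_per_on_le: "\<bar>per_on R C A\<bar> \<le> per_on R C (\<lambda>i j. \<bar>A i j\<bar>)"
  unfolding per_on_def by (rule order_trans[OF sum_abs]) (simp add: abs_prod)

lemma per_on_zero_row:
  assumes "finite R" "i \<in> R" "\<And>j. j \<in> C \<Longrightarrow> A i j = 0"
  shows "per_on R C A = 0"
  unfolding per_on_def
proof (rule sum.neutral, rule ballI)
  fix \<sigma> assume "\<sigma> \<in> matchings R C"
  then have "\<sigma> i \<in> C" using assms(2) by (auto simp: matchings_def bij_betw_def)
  then show "(\<Prod>l\<in>R. A l (\<sigma> l)) = 0" using assms by (intro prod_zero) auto
qed

definition row_norm_on :: "real \<Rightarrow> 'a set \<Rightarrow> ('a \<Rightarrow> 'a \<Rightarrow> real) \<Rightarrow> 'a \<Rightarrow> real" where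
  "row_norm_on p C A i = (\<Sum>j\<in>C. \<bar>A i j\<bar> powr p) powr (1 / p)"

lemma row_norm_on_nonneg: "0 \<le> row_norm_on p C A i"
  by (simp add: row_norm_on_def)

lemma row_norm_on_remove:
  assumes p: "0 < p" and C: "finite C" "j \<in> C" and S: "0 < (\<Sum>j\<in>C. \<bar>A l j\<bar> powr p)"
  shows "row_norm_on p (C - {j}) A l
    = row_norm_on p C A l * (1 - \<bar>A l j\<bar> powr p / (\<Sum>j\<in>C. \<bar>A l j\<bar> powr p)) powr (1 / p)"
proof -
  define S where "S = (\<Sum>j\<in>C. \<bar>A l j\<bar> powr p)"
  have "\<bar>A l j\<bar> powr p \<le> S"
    unfolding S_def using C by (intro member_le_sum) auto
  then have "0 \<le> 1 - \<bar>A l j\<bar> powr p / S"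
    using S by (simp add: S_def)
  moreover have "(\<Sum>j'\<in>C - {j}. \<bar>A l j'\<bar> powr p) = S * (1 - \<bar>A l j\<bar> powr p / S)"
    using C S by (simp add: S_def sum_diff1 field_simps)
  ultimately show ?thesis
    using S by (simp add: row_norm_on_def S_def powr_mult)
qed

lemma abs_entry_eq_row_norm_on:
  assumes p: "0 < p" and S: "0 < (\<Sum>j\<in>C. \<bar>A i j\<bar> powr p)"
  shows "\<bar>A i j\<bar> = row_norm_on p C A i * (\<bar>A i j\<bar> powr p / (\<Sum>j\<in>C. \<bar>A i j\<bar> powr p)) powr (1 / p)"
proof -
  define S where "S = (\<Sum>j\<in>C. \<bar>A i j\<bar> powr p)"
  have "\<bar>A i j\<bar> = (\<bar>A i j\<bar> powr p) powr (1 / p)"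
    using p by (simp add: powr_powr)
  also have "\<dots> = (S * (\<bar>A i j\<bar> powr p / S)) powr (1 / p)"
    using S by (simp add: S_def)
  also have "\<dots> = S powr (1 / p) * (\<bar>A i j\<bar> powr p / S) powr (1 / p)"
    by (intro powr_mult)
  finally show ?thesis
    by (simp add: row_norm_on_def S_def)
qed

definition block_bound :: "real \<Rightarrow> nat \<Rightarrow> real" where
  "block_bound p k = (\<Prod>j = 1..k. step_factor p j)"

lemma block_bound_Suc: "block_bound p (Suc k) = block_bound p k * step_factor p (Suc k)"
  by (simp add: block_bound_def prod.nat_ivl_Suc' mult.commute)

lemma block_bound_pos: "0 < block_bound p k"
  by (simp add: block_bound_def step_factor_def prod_pos)

lemma per_on_row_step:
  fixes A :: "'a \<Rightarrow> 'a \<Rightarrow> real" and B p :: real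
  assumes p: "0 < p" and A: "\<And>i j. 0 \<le> A i j" and R: "finite R" "i \<in> R" and C: "finite C"
    and S: "\<And>l. l \<in> R \<Longrightarrow> 0 < (\<Sum>j\<in>C. A l j powr p)"
    and IH: "\<And>j. j \<in> C \<Longrightarrow> per_on (R - {i}) (C - {j}) A \<le> B * (\<Prod>l\<in>R - {i}. row_norm_on p (C - {j}) A l)"
    and B: "0 \<le> B"
  defines "x j l \<equiv> A l j powr p / (\<Sum>j\<in>C. A l j powr p)"
  shows "per_on R C A \<le> B * (\<Prod>l\<in>R. row_norm_on p C A l)
    * (\<Sum>j\<in>C. x j i powr (1 / p) * (\<Prod>l\<in>R - {i}. (1 - x j l) powr (1 / p)))"
proof -
  have absA: "\<bar>A l j\<bar> = A l j" for l j using A[of l j] by simp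
  have S': "0 < (\<Sum>j\<in>C. \<bar>A l j\<bar> powr p)" if "l \<in> R" for l
    using S[OF that] by (simp add: absA)
  have entry: "A i j * (\<Prod>l\<in>R - {i}. row_norm_on p (C - {j}) A l)
      = (\<Prod>l\<in>R. row_norm_on p C A l) * (x j i powr (1 / p) * (\<Prod>l\<in>R - {i}. (1 - x j l) powr (1 / p)))"
    if j: "j \<in> C" for j
  proof -
    have "(\<Prod>l\<in>R - {i}. row_norm_on p (C - {j}) A l)
        = (\<Prod>l\<in>R - {i}. row_norm_on p C A l * (1 - x j l) powr (1 / p))"
      using row_norm_on_remove[OF p C j S'] by (intro prod.cong) (simp_all add: absA x_def)
    moreover have "A i j = row_norm_on p C A i * x j i powr (1 / p)"
      using abs_entry_eq_row_norm_on[where C = C and A = A and i = i and j = j, OF p S'[OF R(2)]] by (simp add: absA x_def)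
    ultimately show ?thesis
      using prod.remove[OF R, of "row_norm_on p C A"] by (simp add: prod.distrib algebra_simps)
  qed
  have "per_on R C A = (\<Sum>j\<in>C. A i j * per_on (R - {i}) (C - {j}) A)"
    by (rule per_on_expand_row[OF R C])
  also have "\<dots> \<le> (\<Sum>j\<in>C. A i j * (B * (\<Prod>l\<in>R - {i}. row_norm_on p (C - {j}) A l)))"
    using IH A by (intro sum_mono mult_left_mono) auto
  also have "\<dots> = B * (\<Prod>l\<in>R. row_norm_on p C A l)
      * (\<Sum>j\<in>C. x j i powr (1 / p) * (\<Prod>l\<in>R - {i}. (1 - x j l) powr (1 / p)))"
    using entry by (simp add: sum_distrib_left algebra_simps)
  finally show ?thesis .
qed

lemma exactly_one_shares_le_step_factor:
  fixes A :: "'a \<Rightarrow> 'a \<Rightarrow> real"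
  assumes p: "1 < p" and A: "\<And>i j. 0 \<le> A i j" and R: "finite R" and C: "finite C" "j \<in> C"
    and S: "\<And>l. l \<in> R \<Longrightarrow> 0 < (\<Sum>j\<in>C. A l j powr p)"
  shows "exactly_one p R (\<lambda>l. A l j powr p / (\<Sum>j\<in>C. A l j powr p)) \<le> step_factor p (card R)"
proof (rule exactly_one_le_step_factor[OF p R])
  fix l assume "l \<in> R"
  moreover have "A l j powr p \<le> (\<Sum>j\<in>C. A l j powr p)"
    using C by (intro member_le_sum) auto
  ultimately show "0 \<le> A l j powr p / (\<Sum>j\<in>C. A l j powr p) \<and> A l j powr p / (\<Sum>j\<in>C. A l j powr p) \<le> 1"
    using S[of l] by (simp add: less_imp_le)
qed

lemma per_on_le_block_bound_Suc:
  fixes A :: "'a \<Rightarrow> 'a \<Rightarrow> real"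
  assumes p: "1 < p" and A: "\<And>i j. 0 \<le> A i j"
    and R: "finite R" "card R = Suc k" and C: "finite C" "card C = Suc k"
    and IH: "\<And>i j. i \<in> R \<Longrightarrow> j \<in> C \<Longrightarrow>
      per_on (R - {i}) (C - {j}) A \<le> block_bound p k * (\<Prod>l\<in>R - {i}. row_norm_on p (C - {j}) A l)"
  shows "per_on R C A \<le> block_bound p (Suc k) * (\<Prod>i\<in>R. row_norm_on p C A i)"
proof -
  define N where "N = (\<Prod>i\<in>R. row_norm_on p C A i)"
  have N: "0 \<le> N" by (simp add: N_def prod_nonneg row_norm_on_nonneg)
  show ?thesis
  proof (cases "\<exists>i\<in>R. (\<Sum>j\<in>C. A i j powr p) = 0")
    case True
    then obtain i where "i \<in> R" "\<forall>j\<in>C. A i j = 0"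
      using C A sum_nonneg_eq_0_iff[OF C(1), of "\<lambda>j. A i j powr p" for i] by auto
    then have "per_on R C A = 0" by (intro per_on_zero_row[OF R(1)]) auto
    then show ?thesis using block_bound_pos[of p "Suc k"] N by (simp add: N_def)
  next
    case False
    then have S: "0 < (\<Sum>j\<in>C. A l j powr p)" if "l \<in> R" for l
      using that by (simp add: sum_nonneg order_le_neq_trans)
    define x where "x j l = A l j powr p / (\<Sum>j\<in>C. A l j powr p)" for j l
    have "real (Suc k) * per_on R C A = (\<Sum>i\<in>R. per_on R C A)"
      using R by simp
    also have "\<dots> \<le> (\<Sum>i\<in>R. block_bound p k * N
        * (\<Sum>j\<in>C. x j i powr (1 / p) * (\<Prod>l\<in>R - {i}. (1 - x j l) powr (1 / p))))"
      unfolding N_def x_def using p A R C S IH block_bound_pos[of p k]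
      by (intro sum_mono per_on_row_step) auto
    also have "\<dots> = block_bound p k * N * (\<Sum>j\<in>C. exactly_one p R (x j))"
      by (simp add: exactly_one_def sum_distrib_left sum.swap[of _ R C])
    also have "\<dots> \<le> block_bound p k * N * (\<Sum>j\<in>C. step_factor p (Suc k))"
      unfolding x_def using exactly_one_shares_le_step_factor[OF p A R(1) C(1) _ S] R N block_bound_pos[of p k]
      by (intro mult_left_mono sum_mono) auto
    also have "\<dots> = real (Suc k) * (block_bound p (Suc k) * N)"
      using C by (simp add: block_bound_Suc)
    finally show ?thesis
      by (simp add: N_def)
  qed
qed

lemma per_on_le_block_bound:
  fixes A :: "'a \<Rightarrow> 'a \<Rightarrow> real"
  assumes p: "1 < p" and A: "\<And>i j. 0 \<le> A i j"
    and R: "finite R" and C: "finite C" and card: "card R = card C"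
  shows "per_on R C A \<le> block_bound p (card R) * (\<Prod>i\<in>R. row_norm_on p C A i)"
  using R C card
proof (induction "card R" arbitrary: R C)
  case 0
  then show ?case by (simp add: block_bound_def)
next
  case (Suc k)
  have "per_on (R - {i}) (C - {j}) A \<le> block_bound p k * (\<Prod>l\<in>R - {i}. row_norm_on p (C - {j}) A l)"
    if "i \<in> R" "j \<in> C" for i j
  proof -
    have "card (R - {i}) = k" "card (C - {j}) = k"
      using Suc.hyps(2) Suc.prems that by (simp_all add: card_Diff_singleton)
    then show ?thesis
      using Suc.hyps(1)[of "R - {i}" "C - {j}"] Suc.prems by simp
  qed
  then have "per_on R C A \<le> block_bound p (Suc k) * (\<Prod>i\<in>R. row_norm_on p C A i)"
    using Suc.hyps(2) Suc.prems by (intro per_on_le_block_bound_Suc[where A = A, OF p A]) auto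
  then show ?case
    using Suc.hyps(2) by simp
qed

lemma per_le_block_bound:
  assumes p: "1 < p" and rows: "\<forall>i<n. row_lp_norm n p A i = 1"
  shows "per n A \<le> block_bound p n"
proof -
  have "per n A \<le> per_on {..<n} {..<n} (\<lambda>i j. \<bar>A i j\<bar>)"
    using abs_per_on_le[of "{..<n}" "{..<n}" A] by (simp add: per_eq_per_on)
  also have "\<dots> \<le> block_bound p n * (\<Prod>i<n. row_norm_on p {..<n} (\<lambda>i j. \<bar>A i j\<bar>) i)"
    using per_on_le_block_bound[OF p, of "\<lambda>i j. \<bar>A i j\<bar>" "{..<n}" "{..<n}"] by simp
  also have "(\<Prod>i<n. row_norm_on p {..<n} (\<lambda>i j. \<bar>A i j\<bar>) i) = 1"
    using rows by (simp add: row_norm_on_def row_lp_norm_def)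
  finally show ?thesis by simp
qed

section \<open>The constant\<close>

lemma sum_ln_eq_ln_fact: "(\<Sum>j = 1..n. ln (real j)) = ln (fact n)"
  by (induction n) (simp_all add: ln_mult add.commute)

lemma sum_kappa: "(\<Sum>j = 1..n. kappa (real j)) = real n * ln (real n) - ln (fact n)"
proof -
  have "kappa (real j) = xlnx (real j) - xlnx (real (j - 1)) - ln (real j)" if "1 \<le> j" for j
  proof (cases "j = 1")
    case False
    then have "1 < real j" using that by simp
    then show ?thesis
      using that by (simp add: kappa_def xlnx_def ln_div of_nat_diff algebra_simps)
  qed (simp add: kappa_def)
  then have "(\<Sum>j = 1..n. kappa (real j))
      = (\<Sum>j = 1..n. (xlnx (real j) - xlnx (real (j - 1))) - ln (real j))"
    by (intro sum.cong) auto
  also have "\<dots> = (\<Sum>j = 1..n. xlnx (real j) - xlnx (real (j - 1))) - (\<Sum>j = 1..n. ln (real j))"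
    by (rule sum_subtractf)
  also have "(\<Sum>j = 1..n. xlnx (real j) - xlnx (real (j - 1))) = xlnx (real n)"
    using sum_telescope''[of 0 n "\<lambda>k. xlnx (real k)"] by simp
  finally show ?thesis
    using sum_ln_eq_ln_fact[of n] by (simp add: xlnx_def)
qed

lemma ln_fact_ge: "1 \<le> m \<Longrightarrow> real m * ln (real m) - real m + 1 \<le> ln (fact m)"
proof (induction m rule: dec_induct)
  case (step m)
  have m: "1 \<le> real m" using step by simp
  have "real m * ln (1 + 1 / real m) \<le> 1"
    using m ln_add_one_self_le_self[of "1 / real m"] by (simp add: field_simps)
  moreover have "1 + 1 / real m = (real m + 1) / real m"
    using m by (simp add: field_simps)
  then have "ln (1 + 1 / real m) = ln (real m + 1) - ln (real m)"
    using m by (simp add: ln_div)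
  moreover have "ln (fact (Suc m)) = ln (real m + 1) + ln (fact m)"
    by (simp add: ln_mult add.commute)
  ultimately show ?case
    using step.IH by (simp add: algebra_simps)
qed simp

lemma linear_minus_ln_fact_le:
  assumes t: "0 < t" shows "real m - t * ln (fact m) \<le> t * exp (1 / t)"
proof (cases "m = 0")
  case False
  define x where "x = real m"
  have x: "0 < x" using False by (simp add: x_def)
  have "ln (exp (1 / t) / x) \<le> exp (1 / t) / x - 1"
    using x by (intro ln_le_minus_one) auto
  then have "t * x * (1 / t - ln x) \<le> t * x * (exp (1 / t) / x - 1)"
    using t x by (intro mult_left_mono) (auto simp: ln_div)
  moreover have "t * x * (1 / t - ln x) = x - t * x * ln x"
    using t by (simp add: field_simps)
  moreover have "t * x * (exp (1 / t) / x - 1) = t * exp (1 / t) - t * x"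
    using x by (simp add: field_simps)
  ultimately have "x + t * x - t * x * ln x \<le> t * exp (1 / t)"
    by simp
  moreover have "t * (x * ln x - x + 1) \<le> t * ln (fact m)"
    using ln_fact_ge[of m] False t by (intro mult_left_mono) (auto simp: x_def)
  ultimately show ?thesis
    using t by (simp add: x_def algebra_simps)
qed (use t in simp)

lemma sum_pos_part_le:
  assumes t: "0 < t" shows "(\<Sum>j = 1..n. max 0 (1 - t * ln (real j))) \<le> t * exp (1 / t)"
proof (induction n)
  case 0
  then show ?case using t by simp
next
  case (Suc n)
  show ?case
  proof (cases "t * ln (real (Suc n)) < 1")
    case True
    have "t * ln (real j) < 1" if "j \<in> {1..Suc n}" for j
    proof -
      have "ln (real j) \<le> ln (real (Suc n))"
        using that by (subst ln_le_cancel_iff) auto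
      then show ?thesis
        using True t mult_left_mono[of "ln (real j)" "ln (real (Suc n))" t] by linarith
    qed
    then have "(\<Sum>j = 1..Suc n. max 0 (1 - t * ln (real j))) = (\<Sum>j = 1..Suc n. 1 - t * ln (real j))"
      by (intro sum.cong) auto
    also have "\<dots> = real (Suc n) - t * ln (fact (Suc n))"
      by (simp only: sum_subtractf sum_ln_eq_ln_fact flip: sum_distrib_left) simp
    finally show ?thesis
      using linear_minus_ln_fact_le[OF t, of "Suc n"] by linarith
  next
    case False
    then show ?thesis using Suc.IH by simp
  qed
qed

lemma block_bound_le:
  assumes p: "1 < p" and n: "1 \<le> n"
  shows "block_bound p n \<le> exp ((p - 1) / p * exp (1 / (p - 1))) * (fact n / real n powr (real n / p))"
proof -
  define e where "e j = (p - 1) * ln (real j) - kappa (real j)" for j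
  have "(\<Sum>j = 1..n. e j) = (p - 1) * (\<Sum>j = 1..n. ln (real j)) - (\<Sum>j = 1..n. kappa (real j))"
    by (simp only: e_def sum_subtractf sum_distrib_left)
  also have "\<dots> = p * ln (fact n) - real n * ln (real n)"
    by (simp only: sum_kappa sum_ln_eq_ln_fact) (simp add: algebra_simps)
  finally have sum_e: "(\<Sum>j = 1..n. e j) = p * ln (fact n) - real n * ln (real n)" .
  have "(\<Sum>j = 1..n. max 0 (e j)) \<le> (\<Sum>j = 1..n. e j) + (p - 1) * exp (1 / (p - 1))"
  proof -
    have "max 0 (e j) \<le> e j + max 0 (1 - (p - 1) * ln (real j))" if "j \<in> {1..n}" for j
      using kappa_le_1[of "real j"] that by (auto simp: e_def)
    then have "(\<Sum>j = 1..n. max 0 (e j)) \<le> (\<Sum>j = 1..n. e j + max 0 (1 - (p - 1) * ln (real j)))"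
      by (rule sum_mono)
    also have "\<dots> = (\<Sum>j = 1..n. e j) + (\<Sum>j = 1..n. max 0 (1 - (p - 1) * ln (real j)))"
      by (rule sum.distrib)
    finally have "(\<Sum>j = 1..n. max 0 (e j)) \<le> (\<Sum>j = 1..n. e j) + (\<Sum>j = 1..n. max 0 (1 - (p - 1) * ln (real j)))" .
    then show ?thesis
      using sum_pos_part_le[of "p - 1" n] p by simp
  qed
  then have "(\<Sum>j = 1..n. max 0 (e j)) / p
      \<le> (p * ln (fact n) - real n * ln (real n) + (p - 1) * exp (1 / (p - 1))) / p"
    using p unfolding sum_e by (intro divide_right_mono) auto
  also have "\<dots> = (p - 1) / p * exp (1 / (p - 1)) + (ln (fact n) - real n / p * ln (real n))"
    using p by (simp add: field_simps)
  finally have "(\<Sum>j = 1..n. max 0 (e j)) / p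
      \<le> (p - 1) / p * exp (1 / (p - 1)) + (ln (fact n) - real n / p * ln (real n))" .
  then have "block_bound p n \<le> exp ((p - 1) / p * exp (1 / (p - 1)) + (ln (fact n) - real n / p * ln (real n)))"
    by (simp add: block_bound_def step_factor_def e_def sum_divide_distrib flip: exp_sum)
  also have "\<dots> = exp ((p - 1) / p * exp (1 / (p - 1))) * (fact n / real n powr (real n / p))"
    using n by (simp add: exp_add exp_diff powr_def)
  finally show ?thesis .
qed

lemma per_identity: "per n (\<lambda>i j. if i = j then 1 else 0) = 1"
proof -
  have "(\<Prod>i<n. if i = \<sigma> i then 1 else 0 :: real) = (if \<sigma> = id then 1 else 0)"
    if "\<sigma> permutes {..<n}" for \<sigma>
  proof (cases "\<sigma> = id")
    case False
    then obtain i where "\<sigma> i \<noteq> i" by (auto simp: fun_eq_iff)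
    moreover from this have "i < n" using that by (auto simp: permutes_def)
    ultimately show ?thesis
      using False by (intro prod_zero[THEN trans]) (auto intro!: bexI[of _ i])
  qed simp
  then have "per n (\<lambda>i j. if i = j then 1 else 0) = (\<Sum>\<sigma> | \<sigma> permutes {..<n}. if \<sigma> = id then 1 else 0)"
    unfolding per_def by (intro sum.cong) auto
  also have "\<dots> = 1"
    using permutes_id[of "{..<n}"] finite_permutations[of "{..<n}"] by (simp add: sum.delta)
  finally show ?thesis .
qed

lemma row_lp_norm_identity:
  assumes "i < n" "0 < p" shows "row_lp_norm n p (\<lambda>i j. if i = j then 1 else 0) i = 1"
proof -
  have "(\<Sum>j<n. \<bar>if i = j then 1 else 0\<bar> powr p) = (\<Sum>j<n. if i = j then 1 else 0 :: real)"
    by (intro sum.cong) auto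
  then show ?thesis
    using assms by (simp add: row_lp_norm_def)
qed

lemma per_const: "per n (\<lambda>i j. c) = fact n * c ^ n"
  using card_permutations[of "{..<n}" n] by (simp add: per_def)

lemma row_lp_norm_const:
  assumes "i < n" "0 < p" shows "row_lp_norm n p (\<lambda>i j. real n powr (- 1 / p)) i = 1"
proof -
  have "\<bar>real n powr (- 1 / p)\<bar> powr p = real n powr (- 1)"
    using assms by (simp add: powr_powr)
  also have "\<dots> = 1 / real n"
    using assms by (simp add: powr_minus_divide)
  finally show ?thesis
    using assms by (simp add: row_lp_norm_def)
qed

lemma per_const_inverse_root:
  assumes "1 \<le> n" shows "per n (\<lambda>i j. real n powr (- 1 / p)) = fact n / real n powr (real n / p)"
proof -
  have "(real n powr (- 1 / p)) ^ n = real n powr (real n * (- 1 / p))"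
    using assms by (simp add: powr_power)
  also have "\<dots> = 1 / real n powr (real n / p)"
    using assms by (simp add: powr_minus_divide [symmetric])
  finally show ?thesis
    by (simp add: per_const)
qed

lemma p0_gt_1:
  fixes n :: nat assumes "2 \<le> n"
  shows "1 < (real n * ln (real n) - (real n - 1) * ln (real n - 1)) / ln (real n)"
proof -
  have "(real n - 1) * ln (real n - 1) < (real n - 1) * ln (real n)"
    using assms by (intro mult_strict_left_mono) auto
  then show ?thesis
    using assms by (simp add: field_simps)
qed

lemma bdd_above_per_unit_rows:
  "1 < p \<Longrightarrow> bdd_above {per n A | A. \<forall>i<n. row_lp_norm n p A i = 1}"
  using per_le_block_bound[of p n] unfolding bdd_above_def by blast

lemma one_le_U: "1 < p \<Longrightarrow> 1 \<le> U n p"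
  unfolding U_def using per_identity[of n] row_lp_norm_identity
  by (intro cSup_upper bdd_above_per_unit_rows)
    (auto intro!: exI[of _ "\<lambda>i j. if i = j then 1 else 0"])

lemma fact_div_le_U: "1 \<le> n \<Longrightarrow> 1 < p \<Longrightarrow> fact n / real n powr (real n / p) \<le> U n p"
  unfolding U_def using per_const_inverse_root[of n p] row_lp_norm_const[of _ n p]
  by (intro cSup_upper bdd_above_per_unit_rows)
    (auto intro!: exI[of _ "\<lambda>i j. real n powr (- 1 / p)"])

lemma U_le_block_bound: "1 < p \<Longrightarrow> U n p \<le> block_bound p n"
  unfolding U_def using per_identity[of n] row_lp_norm_identity[of _ n p]
  by (intro cSup_least) (auto intro: per_le_block_bound)

text \<open>The hypotheses on \<open>p\<close> serve only to give \<open>p > 1\<close>, for which the upper bound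
  holds in general.\<close>

theorem theorem1p3:
  fixes n :: nat and p :: real
  assumes "n \<ge> 2"
    and "(real n * ln (real n) - (real n - 1) * ln (real n - 1)) / ln (real n) \<le> p"
    and "p \<le> 2"
  shows "max 1 (fact n / real n powr (real n / p)) \<le> U n p \<and>
         U n p \<le> exp ((p - 1) / p * exp (1 / (p - 1))) * (fact n / real n powr (real n / p))"
proof -
  have p: "1 < p"
    using p0_gt_1[OF assms(1)] assms(2) by linarith
  have "U n p \<le> block_bound p n"
    by (rule U_le_block_bound[OF p])
  also have "\<dots> \<le> exp ((p - 1) / p * exp (1 / (p - 1))) * (fact n / real n powr (real n / p))"
    using block_bound_le[OF p] assms(1) by simp
  finally show ?thesis
    using one_le_U[OF p] fact_div_le_U[OF _ p] assms(1) by simp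
qed

end
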